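(* Let $G$ be a $\sigma$-compact locally compact Abelian group, $C>0$, let $\{P_\varepsilon\}_{0<\varepsilon<C}$ be a family of subsets of $G$ and $L\le G$ a subgroup satisfying (A1)–(A5) below. Then there is a unique Hausdorff-or-not group topology on $L$ for which $\{P_\varepsilon\}_{0<\varepsilon<C}$ is a neighbourhood basis of $0$; let $H$ be the (Hausdorff) completion of $L$ with respect to this (uniform) topology and $\phi: L\to H$ the completion map. Then $H$ is a locally compact Abelian group, the set $\widetilde{L}:=\{(t,\phi(t)) : t\in L\}$ is a lattice in $G\times H$, and $(G\times H,\widetilde{L})$ is a cut and project scheme, with $\pi_1(\widetilde L)=L$ and star map $\phi$. The conditions are: (A1) $0\in P_\varepsilon=-P_\varepsilon$ for all $0<\varepsilon<C$; (A2) each $P_\varepsilon$ ($0<\varepsilon<C$) is locally finite in $G$; (A3) $P_\varepsilon+P_{\varepsilon'}\subset P_{\varepsilon+\varepsilon'}$ whenever $\varepsilon,\varepsilon'>0$, $\varepsilon+\varepsilon'<C$; (A4) each $P_\varepsilon$ ($0<\varepsilon<C$) is relatively dense in $G$; (A5) $P_\varepsilon\subset L$ for all $0<\varepsilon<C$.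
   Context: A subset $A\subset G$ is locally finite if $A\cap K$ is finite for every compact $K$; relatively dense if $A+K=G$ for some compact $K$. A lattice in a locally compact Abelian group is a discrete subgroup that is relatively dense (equivalently, cocompact). A cut and project scheme $(G\times H,\widetilde L)$ consists of locally compact Abelian groups $G,H$ and a lattice $\widetilde L\subset G\times H$ such that the projection $\pi_1:G\times H\to G$ is injective on $\widetilde L$ and $\pi_2(\widetilde L)$ is dense in $H$; the star map $\star:\pi_1(\widetilde L)\to H$ is $x\mapsto x^\star:=\pi_2((\pi_1|_{\widetilde L})^{-1}(x))$. *)

theory Defs
  imports "HOL-Analysis.Analysis"
begin

definition locally_finite_set :: "'a::topological_space set \<Rightarrow> bool" where
  "locally_finite_set A \<longleftrightarrow> (\<forall>K. compact K \<longrightarrow> finite (A \<inter> K))"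

definition relatively_dense :: "'a::{topological_space, ab_group_add} set \<Rightarrow> bool" where
  "relatively_dense A \<longleftrightarrow> (\<exists>K. compact K \<and> {a + k | a k. a \<in> A \<and> k \<in> K} = UNIV)"

definition is_subgroup :: "'a::ab_group_add set \<Rightarrow> bool" where
  "is_subgroup A \<longleftrightarrow> 0 \<in> A \<and> (\<forall>x\<in>A. \<forall>y\<in>A. x + y \<in> A) \<and> (\<forall>x\<in>A. - x \<in> A)"

definition discrete_set :: "'a::topological_space set \<Rightarrow> bool" where
  "discrete_set A \<longleftrightarrow> (\<forall>x\<in>A. \<exists>U. open U \<and> U \<inter> A = {x})"

definition is_lattice :: "'a::{topological_space, ab_group_add} set \<Rightarrow> bool" where
  "is_lattice A \<longleftrightarrow> is_subgroup A \<and> discrete_set A \<and> relatively_dense A"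

definition sigma_compact_space :: "'a::topological_space itself \<Rightarrow> bool" where
  "sigma_compact_space _ \<longleftrightarrow>
     (\<exists>K :: nat \<Rightarrow> 'a set. (\<forall>n. compact (K n)) \<and> (\<Union>n. K n) = UNIV)"

definition star_map :: "('g \<times> 'h) set \<Rightarrow> 'g \<Rightarrow> 'h" where
  "star_map Lt x = snd (THE p. p \<in> Lt \<and> fst p = x)"

definition cut_and_project_scheme ::
  "('g::{topological_space, ab_group_add} \<times> 'h::{topological_space, ab_group_add}) set \<Rightarrow> bool" where
  "cut_and_project_scheme Lt \<longleftrightarrow>
     is_lattice Lt \<and> inj_on fst Lt \<and> closure (snd ` Lt) = UNIV"

text \<open>Cauchy filters and completeness for the (two-sided = left = right, abelian)
  group uniformity.\<close>
definition group_cauchy :: "'a::{topological_space, ab_group_add} filter \<Rightarrow> bool" where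
  "group_cauchy F \<longleftrightarrow>
     (\<forall>U. open U \<and> 0 \<in> U \<longrightarrow>
        (\<exists>A. eventually (\<lambda>x. x \<in> A) F \<and> (\<forall>x\<in>A. \<forall>y\<in>A. x - y \<in> U)))"

definition complete_group :: "'a::{topological_space, ab_group_add} itself \<Rightarrow> bool" where
  "complete_group _ \<longleftrightarrow>
     (\<forall>F :: 'a filter. F \<noteq> bot \<and> group_cauchy F \<longrightarrow> (\<exists>x. F \<le> nhds x))"

text \<open>phi : L -> H is the (Hausdorff) completion map of L for the group topology on L
  having {P eps | 0 < eps < C} as neighbourhood basis of 0: H is required (in the theorem)
  to be a complete Hausdorff abelian topological group, phi is a homomorphism with dense
  image, and the topology of L is the initial topology of phi (i.e. the preimages under phi
  of neighbourhoods of 0 in H and the sets P eps generate the same neighbourhood filter of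
  0 in L).\<close>
definition is_completion_map ::
  "(real \<Rightarrow> 'g::ab_group_add set) \<Rightarrow> real \<Rightarrow> 'g set \<Rightarrow> ('g \<Rightarrow> 'h::{topological_space, ab_group_add}) \<Rightarrow> bool" where
  "is_completion_map P C L \<phi> \<longleftrightarrow>
     (\<forall>x\<in>L. \<forall>y\<in>L. \<phi> (x + y) = \<phi> x + \<phi> y) \<and>
     closure (\<phi> ` L) = UNIV \<and>
     (\<forall>U. open U \<and> 0 \<in> U \<longrightarrow> (\<exists>\<epsilon>. 0 < \<epsilon> \<and> \<epsilon> < C \<and> P \<epsilon> \<subseteq> {t \<in> L. \<phi> t \<in> U})) \<and>
     (\<forall>\<epsilon>. 0 < \<epsilon> \<and> \<epsilon> < C \<longrightarrow> (\<exists>U. open U \<and> 0 \<in> U \<and> {t \<in> L. \<phi> t \<in> U} \<subseteq> P \<epsilon>))"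

end

theory Submission
  imports Defs
begin

text \<open>
  Fix \<open>\<epsilon> = C/2\<close> and let \<open>E\<close> be the closure of \<open>\<phi>(P \<epsilon>)\<close> in \<open>H\<close>. For small \<open>\<delta>\<close>,
  relative denseness of \<open>P \<delta>\<close> and local finiteness of \<open>P (\<epsilon> + \<delta>) \<supseteq> P \<epsilon> - P \<delta>\<close> cover
  \<open>P \<epsilon>\<close> by finitely many translates of \<open>P \<delta>\<close>, whose image under \<open>\<phi>\<close> is small. Hence \<open>E\<close>
  is totally bounded, and compact because \<open>H\<close> is complete (a maximal filter containing \<open>E\<close>
  is Cauchy). As \<open>E\<close> contains a neighbourhood of \<open>0\<close>, \<open>H\<close> is locally compact.
  Take a neighbourhood \<open>U\<close> of \<open>0\<close> in \<open>H\<close> with \<open>\<phi>\<^sup>-\<^sup>1(U) \<subseteq> P \<epsilon>\<close>: the graph of \<open>\<phi>\<close> is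
  discrete because its points over \<open>U\<close> lie over the locally finite set \<open>P \<epsilon>\<close>, and it is
  relatively dense with compact fundamental set \<open>K \<times> (E - E)\<close>, where \<open>P \<epsilon> + K = G\<close>.
\<close>

lemma ex_open_zero_pair:
  fixes f :: "'a::{topological_space, zero} \<Rightarrow> 'a \<Rightarrow> 'b::topological_space"
  assumes "continuous_on UNIV (\<lambda>p. f (fst p) (snd p))" "open W" "f 0 0 \<in> W"
  shows "\<exists>V. open V \<and> 0 \<in> V \<and> (\<forall>a\<in>V. \<forall>b\<in>V. f a b \<in> W)"
proof -
  have "open ((\<lambda>p. f (fst p) (snd p)) -` W)" "(0, 0) \<in> (\<lambda>p. f (fst p) (snd p)) -` W"
    using assms by (simp_all add: open_vimage)
  then obtain A B where "open A" "open B" "(0, 0) \<in> A \<times> B"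
      "A \<times> B \<subseteq> (\<lambda>p. f (fst p) (snd p)) -` W"
    by (rule open_prod_elim)
  then show ?thesis
    by (intro exI[of _ "A \<inter> B"]) auto
qed

lemma closure_group_approachable:
  fixes A :: "'a::topological_group_add set"
  assumes "x \<in> closure A" "open W" "0 \<in> W"
  shows "\<exists>a\<in>A. - a + x \<in> W"
proof -
  have "open ((\<lambda>y. - y + x) -` W)"
    using assms by (intro continuous_intros) auto
  moreover have "x \<in> (\<lambda>y. - y + x) -` W"
    using assms by simp
  ultimately show ?thesis
    using assms(1) open_Int_closure_eq_empty by blast
qed

lemma locally_compact_space_if_compact_neighbourhood_0:
  fixes K :: "'a::topological_group_add set"
  assumes "open U" "0 \<in> U" "U \<subseteq> K" "compact K"
  shows "locally_compact_space (euclidean :: 'a topology)"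
  unfolding locally_compact_space_def
proof
  fix x :: 'a
  have "open ((\<lambda>y. - x + y) -` U)"
    using assms(1) by (intro continuous_intros)
  moreover have "x \<in> (\<lambda>y. - x + y) -` U"
    using assms(2) by simp
  moreover have "compact ((\<lambda>y. x + y) ` K)"
    using assms(4) by (intro compact_continuous_image continuous_intros)
  moreover have "(\<lambda>y. - x + y) -` U \<subseteq> (\<lambda>y. x + y) ` K"
    using assms(3) by (force simp: add.assoc[symmetric])
  ultimately show "\<exists>V K. openin euclidean V \<and> compactin euclidean K \<and> x \<in> V \<and> V \<subseteq> K"
    by (metis open_openin compactin_euclidean_iff)
qed

section \<open>Total boundedness and compactness in complete groups\<close>

definition group_totally_bounded :: "'a::{topological_space, ab_group_add} set \<Rightarrow> bool" where
  "group_totally_bounded A \<longleftrightarrow>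
     (\<forall>W. open W \<and> 0 \<in> W \<longrightarrow> (\<exists>S. finite S \<and> (\<forall>x\<in>A. \<exists>s\<in>S. x - s \<in> W)))"

lemma group_totally_bounded_closure:
  fixes A :: "'a::topological_ab_group_add set"
  assumes "group_totally_bounded A"
  shows "group_totally_bounded (closure A)"
  unfolding group_totally_bounded_def
proof (intro allI impI)
  fix W :: "'a set"
  assume W: "open W \<and> 0 \<in> W"
  have "continuous_on UNIV (\<lambda>p::'a \<times> 'a. fst p + snd p)"
    by (intro continuous_intros)
  then obtain V where V: "open V" "0 \<in> V" "\<forall>a\<in>V. \<forall>b\<in>V. a + b \<in> W"
    using ex_open_zero_pair[of "(+)" W] W by auto
  obtain S where S: "finite S" "\<forall>a\<in>A. \<exists>s\<in>S. a - s \<in> V"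
    using assms V(1,2) unfolding group_totally_bounded_def by blast
  have "\<exists>s\<in>S. x - s \<in> W" if x: "x \<in> closure A" for x
  proof -
    obtain a where a: "a \<in> A" "- a + x \<in> V"
      using closure_group_approachable[OF x V(1,2)] by blast
    then obtain s where "s \<in> S" "a - s \<in> V"
      using S(2) by blast
    moreover have "x - s = (- a + x) + (a - s)"
      by simp
    ultimately show ?thesis
      using V(3) a(2) by metis
  qed
  then show "\<exists>S. finite S \<and> (\<forall>x\<in>closure A. \<exists>s\<in>S. x - s \<in> W)"
    using S(1) by blast
qed

lemma ex_maximal_filter_le:
  fixes F :: "'a filter"
  assumes "F \<noteq> bot"
  shows "\<exists>U\<le>F. U \<noteq> bot \<and> (\<forall>G. G \<noteq> bot \<longrightarrow> G \<le> U \<longrightarrow> G = U)"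
proof -
  define A where "A = {G. G \<noteq> bot \<and> G \<le> F}"
  have "\<exists>U\<in>A. \<forall>G\<in>A. G \<le> U \<longrightarrow> G = U"
  proof (rule predicate_Zorn)
    show "partial_order_on A (relation_of (\<lambda>G H. H \<le> G) A)"
      by (rule partial_order_on_relation_ofI) (blast intro: order_trans antisym)+
  next
    fix Ch assume Ch: "Ch \<in> Chains (relation_of (\<lambda>G H. H \<le> G) A)"
    then have Ch_A: "Ch \<subseteq> A" and Ch_total: "\<And>G H. G \<in> Ch \<Longrightarrow> H \<in> Ch \<Longrightarrow> G \<le> H \<or> H \<le> G"
      by (auto simp: Chains_def relation_of_def)
    have "inf F (Inf Ch) \<noteq> bot"
    proof (cases "Ch = {}")
      case False
      have "\<exists>K\<in>Ch. K \<le> inf G H" if "G \<in> Ch" "H \<in> Ch" for G H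
        using Ch_total[OF that] that by (metis inf_absorb1 inf_absorb2 order_refl)
      then have Inf_eventually: "eventually P (Inf Ch) \<longleftrightarrow> (\<exists>G\<in>Ch. eventually P G)" for P
        using eventually_Inf_base[OF False] by blast
      have "\<not> eventually (\<lambda>x. False) (Inf Ch)"
      proof
        assume "eventually (\<lambda>x. False) (Inf Ch)"
        then obtain G where "G \<in> Ch" "eventually (\<lambda>x. False) G"
          using Inf_eventually by blast
        then show False
          using Ch_A by (auto simp: A_def trivial_limit_def)
      qed
      moreover have "Inf Ch \<le> F"
        using False Ch_A by (auto simp: A_def intro: Inf_lower2)
      ultimately show ?thesis
        by (simp add: inf_absorb2 trivial_limit_def)
    qed (use assms in simp)
    then show "\<exists>U\<in>A. \<forall>G\<in>Ch. U \<le> G"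
      by (intro bexI[of _ "inf F (Inf Ch)"]) (auto simp: A_def intro: le_infI2 Inf_lower)
  qed
  then obtain U where "U \<noteq> bot" "U \<le> F" "\<And>G. G \<noteq> bot \<Longrightarrow> G \<le> F \<Longrightarrow> G \<le> U \<Longrightarrow> G = U"
    unfolding A_def by blast
  then show ?thesis
    by (meson order_trans)
qed

lemma maximal_filter_frequently_imp_eventually:
  assumes max: "\<And>G. G \<noteq> bot \<Longrightarrow> G \<le> U \<Longrightarrow> G = U"
    and "frequently P U"
  shows "eventually P U"
proof -
  have "inf U (principal {x. P x}) \<noteq> bot"
    using assms(2) by (simp add: trivial_limit_def eventually_inf_principal frequently_def)
  then have "inf U (principal {x. P x}) = U"
    by (rule max) simp
  moreover have "eventually P (inf U (principal {x. P x}))"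
    by (simp add: eventually_inf_principal)
  ultimately show ?thesis
    by simp
qed

lemma maximal_filter_group_cauchy:
  fixes U :: "'a::topological_ab_group_add filter"
  assumes max: "\<And>G. G \<noteq> bot \<Longrightarrow> G \<le> U \<Longrightarrow> G = U" and "U \<noteq> bot"
    and "group_totally_bounded E" and "eventually (\<lambda>x. x \<in> E) U"
  shows "group_cauchy U"
  unfolding group_cauchy_def
proof (intro allI impI)
  fix W :: "'a set"
  assume W: "open W \<and> 0 \<in> W"
  have "continuous_on UNIV (\<lambda>p::'a \<times> 'a. fst p - snd p)"
    by (intro continuous_intros)
  then obtain V where V: "open V" "0 \<in> V" "\<forall>a\<in>V. \<forall>b\<in>V. a - b \<in> W"
    using ex_open_zero_pair[of "(-)" W] W by auto
  obtain S where S: "finite S" "\<forall>x\<in>E. \<exists>s\<in>S. x - s \<in> V"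
    using assms(3) V(1,2) unfolding group_totally_bounded_def by blast
  have "eventually (\<lambda>x. \<exists>s\<in>S. x - s \<in> V) U"
    using assms(4) by (rule eventually_mono) (use S(2) in blast)
  then have "frequently (\<lambda>x. \<exists>s\<in>S. x - s \<in> V) U"
    by (rule eventually_frequently[OF assms(2)])
  then have "\<exists>s\<in>S. frequently (\<lambda>x. x - s \<in> V) U"
    by (rule frequently_bex_finite[OF S(1)])
  then obtain s where s: "eventually (\<lambda>x. x - s \<in> V) U"
    using maximal_filter_frequently_imp_eventually[OF max] by blast
  have "x - y \<in> W" if "x - s \<in> V" "y - s \<in> V" for x y
    using V(3) that by (metis diff_diff_eq2 diff_add_cancel)
  then show "\<exists>A. eventually (\<lambda>x. x \<in> A) U \<and> (\<forall>x\<in>A. \<forall>y\<in>A. x - y \<in> W)"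
    using s by (intro exI[of _ "{x. x - s \<in> V}"]) auto
qed

lemma compact_if_closed_group_totally_bounded:
  fixes E :: "'a::topological_ab_group_add set"
  assumes "complete_group TYPE('a)" "closed E" "group_totally_bounded E"
  shows "compact E"
  unfolding compact_filter
proof (intro allI impI)
  fix F :: "'a filter"
  assume F: "F \<noteq> bot" "eventually (\<lambda>x. x \<in> E) F"
  obtain U where U: "U \<le> F" "U \<noteq> bot" "\<And>G. G \<noteq> bot \<Longrightarrow> G \<le> U \<Longrightarrow> G = U"
    using ex_maximal_filter_le[OF F(1)] by blast
  have UE: "eventually (\<lambda>x. x \<in> E) U"
    using U(1) F(2) by (rule filter_leD)
  have "group_cauchy U"
    using U(3,2) assms(3) UE by (rule maximal_filter_group_cauchy)
  then obtain x where x: "U \<le> nhds x"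
    using assms(1) U(2) unfolding complete_group_def by blast
  then have "x \<in> E"
    using Lim_in_closed_set[OF assms(2) UE U(2), of x] by (simp add: filterlim_def)
  moreover have "inf (nhds x) F \<noteq> bot"
    using x U(1,2) by (metis bot_unique le_inf_iff)
  ultimately show "\<exists>x\<in>E. inf (nhds x) F \<noteq> bot"
    by blast
qed

section \<open>Windows\<close>

lemma relatively_dense_finite_cover:
  assumes "relatively_dense B" "locally_finite_set S" "\<forall>a\<in>A. \<forall>b\<in>B. a - b \<in> S"
  shows "\<exists>F. finite F \<and> F \<subseteq> S \<and> (\<forall>a\<in>A. \<exists>b\<in>B. \<exists>f\<in>F. a = b + f)"
proof -
  obtain K where K: "compact K" "{b + k | b k. b \<in> B \<and> k \<in> K} = UNIV"
    using assms(1) unfolding relatively_dense_def by blast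
  have "\<exists>b\<in>B. \<exists>f\<in>S \<inter> K. a = b + f" if "a \<in> A" for a
  proof -
    obtain b k where "b \<in> B" "k \<in> K" "a = b + k"
      using K(2) by blast
    moreover have "k = a - b"
      using \<open>a = b + k\<close> by simp
    ultimately show ?thesis
      using assms(3) \<open>a \<in> A\<close> by fastforce
  qed
  moreover have "finite (S \<inter> K)"
    using assms(2) K(1) unfolding locally_finite_set_def by blast
  ultimately show ?thesis
    by (intro exI[of _ "S \<inter> K"]) auto
qed

locale window_family =
  fixes P :: "real \<Rightarrow> 'g::topological_ab_group_add set" and C :: real
  assumes window_zero_symmetric: "\<And>\<epsilon>. 0 < \<epsilon> \<Longrightarrow> \<epsilon> < C \<Longrightarrow> 0 \<in> P \<epsilon> \<and> uminus ` P \<epsilon> = P \<epsilon>"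
    and window_locally_finite: "\<And>\<epsilon>. 0 < \<epsilon> \<Longrightarrow> \<epsilon> < C \<Longrightarrow> locally_finite_set (P \<epsilon>)"
    and window_add: "\<And>\<epsilon> \<epsilon>'. 0 < \<epsilon> \<Longrightarrow> 0 < \<epsilon>' \<Longrightarrow> \<epsilon> + \<epsilon>' < C \<Longrightarrow>
               {x + y | x y. x \<in> P \<epsilon> \<and> y \<in> P \<epsilon>'} \<subseteq> P (\<epsilon> + \<epsilon>')"
    and window_relatively_dense: "\<And>\<epsilon>. 0 < \<epsilon> \<Longrightarrow> \<epsilon> < C \<Longrightarrow> relatively_dense (P \<epsilon>)"
begin

lemma window_add_mem:
  "0 < \<epsilon> \<Longrightarrow> 0 < \<epsilon>' \<Longrightarrow> \<epsilon> + \<epsilon>' < C \<Longrightarrow> x \<in> P \<epsilon> \<Longrightarrow> y \<in> P \<epsilon>' \<Longrightarrow> x + y \<in> P (\<epsilon> + \<epsilon>')"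
  using window_add by blast

lemma window_uminus:
  assumes "0 < \<epsilon>" "\<epsilon> < C" "x \<in> P \<epsilon>"
  shows "- x \<in> P \<epsilon>"
proof -
  have "- x \<in> uminus ` P \<epsilon>"
    using assms(3) by (rule imageI)
  then show ?thesis
    using window_zero_symmetric[OF assms(1,2)] by simp
qed

lemma window_mono:
  assumes "0 < a" "a \<le> b" "b < C"
  shows "P a \<subseteq> P b"
proof (cases "a = b")
  case False
  then have "0 < b - a"
    using assms(2) by simp
  then have "x + 0 \<in> P (a + (b - a))" if "x \<in> P a" for x
    using assms that window_zero_symmetric[of "b - a"] by (intro window_add_mem) auto
  then show ?thesis
    by auto
qed simp

lemma window_finite_cover:
  assumes "0 < \<epsilon>" "0 < \<delta>" "\<epsilon> + \<delta> < C"
  shows "\<exists>F. finite F \<and> F \<subseteq> P (\<epsilon> + \<delta>) \<and> (\<forall>x\<in>P \<epsilon>. \<exists>p\<in>P \<delta>. \<exists>f\<in>F. x = p + f)"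
proof (rule relatively_dense_finite_cover)
  show "relatively_dense (P \<delta>)" "locally_finite_set (P (\<epsilon> + \<delta>))"
    using assms by (auto intro: window_relatively_dense window_locally_finite)
  show "\<forall>x\<in>P \<epsilon>. \<forall>p\<in>P \<delta>. x - p \<in> P (\<epsilon> + \<delta>)"
  proof (intro ballI)
    fix x p
    assume "x \<in> P \<epsilon>" "p \<in> P \<delta>"
    then have "x + - p \<in> P (\<epsilon> + \<delta>)"
      using assms by (intro window_add_mem window_uminus) auto
    then show "x - p \<in> P (\<epsilon> + \<delta>)"
      by simp
  qed
qed

end

section \<open>Graphs of additive maps\<close>

lemma is_subgroup_iff_diff: "is_subgroup A \<longleftrightarrow> 0 \<in> A \<and> (\<forall>x\<in>A. \<forall>y\<in>A. x - y \<in> A)"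
proof
  assume "is_subgroup A"
  then show "0 \<in> A \<and> (\<forall>x\<in>A. \<forall>y\<in>A. x - y \<in> A)"
    unfolding is_subgroup_def by (metis diff_conv_add_uminus)
next
  assume A: "0 \<in> A \<and> (\<forall>x\<in>A. \<forall>y\<in>A. x - y \<in> A)"
  then have "- x \<in> A" if "x \<in> A" for x
    using that by (metis diff_0)
  then show "is_subgroup A"
    unfolding is_subgroup_def using A by (metis diff_minus_eq_add)
qed

lemma additive_on_diff:
  fixes \<phi> :: "'a::ab_group_add \<Rightarrow> 'b::ab_group_add"
  assumes "is_subgroup L" "\<forall>x\<in>L. \<forall>y\<in>L. \<phi> (x + y) = \<phi> x + \<phi> y" "x \<in> L" "y \<in> L"
  shows "\<phi> (x - y) = \<phi> x - \<phi> y"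
proof -
  have "x - y \<in> L"
    using assms(1,3,4) by (simp add: is_subgroup_iff_diff)
  then have "\<phi> x = \<phi> (x - y) + \<phi> y"
    using assms(2,4) by (metis diff_add_cancel)
  then show ?thesis
    by simp
qed

lemma graph_is_subgroup:
  fixes \<phi> :: "'a::ab_group_add \<Rightarrow> 'b::ab_group_add"
  assumes "is_subgroup L" "\<forall>x\<in>L. \<forall>y\<in>L. \<phi> (x + y) = \<phi> x + \<phi> y"
  shows "is_subgroup {(t, \<phi> t) | t. t \<in> L}"
  unfolding is_subgroup_iff_diff
proof (intro conjI ballI)
  have "0 \<in> L"
    using assms(1) by (simp add: is_subgroup_def)
  moreover have "\<phi> 0 = 0"
    using additive_on_diff[OF assms \<open>0 \<in> L\<close> \<open>0 \<in> L\<close>] by simp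
  ultimately show "0 \<in> {(t, \<phi> t) | t. t \<in> L}"
    by (auto simp: zero_prod_def)
next
  fix x y
  assume "x \<in> {(t, \<phi> t) | t. t \<in> L}" "y \<in> {(t, \<phi> t) | t. t \<in> L}"
  then obtain s t where "s \<in> L" "t \<in> L" "x = (s, \<phi> s)" "y = (t, \<phi> t)"
    by blast
  moreover have "s - t \<in> L"
    using assms(1) \<open>s \<in> L\<close> \<open>t \<in> L\<close> by (simp add: is_subgroup_iff_diff)
  ultimately have "x - y = (s - t, \<phi> (s - t))"
    using additive_on_diff[OF assms] by simp
  then show "x - y \<in> {(t, \<phi> t) | t. t \<in> L}"
    using \<open>s - t \<in> L\<close> by blast
qed

lemma locally_finite_set_isolated:
  fixes A :: "'a::t1_space set"
  assumes "locally_compact_space (euclidean :: 'a topology)" "locally_finite_set A"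
  shows "\<exists>V. open V \<and> x \<in> V \<and> V \<inter> A \<subseteq> {x}"
proof -
  have "\<exists>V K. openin euclidean V \<and> compactin euclidean K \<and> x \<in> V \<and> V \<subseteq> K"
    using assms(1) unfolding locally_compact_space_def by simp
  then obtain V K where VK: "open V" "compact K" "x \<in> V" "V \<subseteq> K"
    by auto
  have "finite (A \<inter> K - {x})"
    using assms(2) VK(2) unfolding locally_finite_set_def by blast
  then have "open (V - (A \<inter> K - {x}))"
    using VK(1) by (simp add: open_Diff finite_imp_closed)
  then show ?thesis
    using VK(3,4) by (intro exI[of _ "V - (A \<inter> K - {x})"]) auto
qed

lemma graph_discrete:
  fixes \<phi> :: "'g::{topological_ab_group_add, t1_space} \<Rightarrow> 'h::topological_ab_group_add"
  assumes "locally_compact_space (euclidean :: 'g topology)"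
    and "is_subgroup L" "\<forall>x\<in>L. \<forall>y\<in>L. \<phi> (x + y) = \<phi> x + \<phi> y"
    and "open U" "0 \<in> U" "locally_finite_set {t \<in> L. \<phi> t \<in> U}"
  shows "discrete_set {(t, \<phi> t) | t. t \<in> L}"
  unfolding discrete_set_def
proof
  fix z
  assume "z \<in> {(t, \<phi> t) | t. t \<in> L}"
  then obtain t where t: "t \<in> L" "z = (t, \<phi> t)"
    by blast
  obtain V where V: "open V" "0 \<in> V" "V \<inter> {t \<in> L. \<phi> t \<in> U} \<subseteq> {0}"
    using locally_finite_set_isolated[OF assms(1,6)] by blast
  define W where "W = (\<lambda>s. s - t) -` V \<times> (\<lambda>h. h - \<phi> t) -` U"
  have "open W"
    unfolding W_def using V(1) assms(4) by (intro open_Times continuous_intros)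
  moreover have unique: "s = t" if "s \<in> L" "(s, \<phi> s) \<in> W" for s
  proof -
    have "s - t \<in> L"
      using assms(2) that(1) t(1) by (simp add: is_subgroup_iff_diff)
    moreover have "\<phi> (s - t) \<in> U" "s - t \<in> V"
      using that(2) additive_on_diff[OF assms(2,3) that(1) t(1)] unfolding W_def by simp_all
    ultimately show "s = t"
      using V(3) by auto
  qed
  moreover have "W \<inter> {(t, \<phi> t) | t. t \<in> L} = {z}"
  proof (intro equalityI subsetI)
    fix w
    assume "w \<in> W \<inter> {(t, \<phi> t) | t. t \<in> L}"
    then obtain s where "s \<in> L" "(s, \<phi> s) \<in> W" "w = (s, \<phi> s)"
      by blast
    then show "w \<in> {z}"
      using unique t(2) by simp
  next
    fix w
    assume "w \<in> {z}"
    moreover have "z \<in> W"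
      using t(2) V(2) assms(5) unfolding W_def by simp
    ultimately show "w \<in> W \<inter> {(t, \<phi> t) | t. t \<in> L}"
      using t by blast
  qed
  ultimately show "\<exists>W. open W \<and> W \<inter> {(t, \<phi> t) | t. t \<in> L} = {z}"
    by blast
qed

lemma graph_relatively_dense:
  fixes \<phi> :: "'g::{topological_space, ab_group_add} \<Rightarrow> 'h::topological_ab_group_add"
  assumes "is_subgroup L" "\<forall>x\<in>L. \<forall>y\<in>L. \<phi> (x + y) = \<phi> x + \<phi> y"
    and "A \<subseteq> L" "relatively_dense A" "compact E" "\<phi> ` A \<subseteq> E" "\<And>h. \<exists>s\<in>L. h - \<phi> s \<in> E"
  shows "relatively_dense {(t, \<phi> t) | t. t \<in> L}"
proof -
  obtain K where K: "compact K" "{a + k | a k. a \<in> A \<and> k \<in> K} = UNIV"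
    using assms(4) unfolding relatively_dense_def by blast
  define D where "D = (\<lambda>p. fst p - snd p) ` (E \<times> E)"
  have "continuous_on (E \<times> E) (\<lambda>p. fst p - snd p)"
    by (intro continuous_intros)
  then have "compact (K \<times> D)"
    unfolding D_def using K(1) assms(5) by (intro compact_Times compact_continuous_image)
  moreover have "z \<in> {l + k | l k. l \<in> {(t, \<phi> t) | t. t \<in> L} \<and> k \<in> K \<times> D}" for z
  proof -
    obtain g h where z: "z = (g, h)"
      by (cases z) blast
    obtain s where s: "s \<in> L" "h - \<phi> s \<in> E"
      using assms(7) by blast
    obtain a k where ak: "a \<in> A" "k \<in> K" "g - s = a + k"
      using K(2) by blast
    have "a \<in> L" "s + a \<in> L"
      using ak(1) assms(1,3) s(1) by (auto simp: is_subgroup_def)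
    then have "z = (s + a, \<phi> (s + a)) + (k, (h - \<phi> s) - \<phi> a)"
      using z ak(3) assms(2) s(1) by (simp add: algebra_simps)
    moreover have "(h - \<phi> s) - \<phi> a \<in> D"
      unfolding D_def using s(2) ak(1) assms(6) by (intro image_eqI[of _ _ "(h - \<phi> s, \<phi> a)"]) auto
    moreover have "(s + a, \<phi> (s + a)) \<in> {(t, \<phi> t) | t. t \<in> L}"
      using \<open>s + a \<in> L\<close> by blast
    ultimately show ?thesis
      using ak(2) by blast
  qed
  ultimately show ?thesis
    unfolding relatively_dense_def by blast
qed

lemma fst_image_graph: "fst ` {(t, \<phi> t) | t. t \<in> L} = L"
  by force

lemma star_map_graph:
  assumes "t \<in> L"
  shows "star_map {(t, \<phi> t) | t. t \<in> L} t = \<phi> t"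
proof -
  have "(THE p. p \<in> {(t, \<phi> t) | t. t \<in> L} \<and> fst p = t) = (t, \<phi> t)"
    using assms by (intro the_equality) auto
  then show ?thesis
    by (simp add: star_map_def)
qed

lemma graph_cut_and_project_scheme:
  assumes "is_lattice {(t, \<phi> t) | t. t \<in> L}" "closure (\<phi> ` L) = UNIV"
  shows "cut_and_project_scheme {(t, \<phi> t) | t. t \<in> L}"
proof -
  have "snd ` {(t, \<phi> t) | t. t \<in> L} = \<phi> ` L"
    by force
  moreover have "inj_on fst {(t, \<phi> t) | t. t \<in> L}"
    by (auto simp: inj_on_def)
  ultimately show ?thesis
    using assms by (simp add: cut_and_project_scheme_def)
qed

section \<open>The completion of the window topology\<close>

locale window_completion = window_family P C
  for P :: "real \<Rightarrow> 'g::{topological_ab_group_add, t1_space} set" and C :: real +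
  fixes L :: "'g set" and \<phi> :: "'g \<Rightarrow> 'h::topological_ab_group_add"
  assumes C_pos: "0 < C"
    and subgroup: "is_subgroup L"
    and windows_subset: "\<And>\<epsilon>. 0 < \<epsilon> \<Longrightarrow> \<epsilon> < C \<Longrightarrow> P \<epsilon> \<subseteq> L"
    and completion: "is_completion_map P C L \<phi>"
begin

lemma completion_additive: "\<forall>x\<in>L. \<forall>y\<in>L. \<phi> (x + y) = \<phi> x + \<phi> y"
  using completion unfolding is_completion_map_def by (elim conjE)

lemma completion_dense: "closure (\<phi> ` L) = UNIV"
  using completion unfolding is_completion_map_def by (elim conjE)

lemma completion_image_window_small:
  assumes "open U" "0 \<in> U"
  shows "\<exists>\<delta>. 0 < \<delta> \<and> \<delta> < C \<and> \<phi> ` P \<delta> \<subseteq> U"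
proof -
  have "\<forall>U. open U \<and> 0 \<in> U \<longrightarrow> (\<exists>\<delta>. 0 < \<delta> \<and> \<delta> < C \<and> P \<delta> \<subseteq> {t \<in> L. \<phi> t \<in> U})"
    using completion unfolding is_completion_map_def by (elim conjE)
  then obtain \<delta> where "0 < \<delta>" "\<delta> < C" "P \<delta> \<subseteq> {t \<in> L. \<phi> t \<in> U}"
    using assms by blast
  then show ?thesis
    by (intro exI[of _ \<delta>]) auto
qed

lemma completion_window_nhd:
  assumes "0 < \<epsilon>" "\<epsilon> < C"
  obtains U where "open U" "0 \<in> U" "{t \<in> L. \<phi> t \<in> U} \<subseteq> P \<epsilon>"
proof -
  have "\<forall>\<epsilon>. 0 < \<epsilon> \<and> \<epsilon> < C \<longrightarrow> (\<exists>U. open U \<and> 0 \<in> U \<and> {t \<in> L. \<phi> t \<in> U} \<subseteq> P \<epsilon>)"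
    using completion unfolding is_completion_map_def by (elim conjE)
  then show ?thesis
    using assms that by blast
qed

lemma image_window_totally_bounded:
  assumes \<epsilon>: "0 < \<epsilon>" "\<epsilon> < C"
  shows "group_totally_bounded (\<phi> ` P \<epsilon>)"
  unfolding group_totally_bounded_def
proof (intro allI impI)
  fix W :: "'h set"
  assume "open W \<and> 0 \<in> W"
  then obtain \<delta>' where \<delta>': "0 < \<delta>'" "\<delta>' < C" "\<phi> ` P \<delta>' \<subseteq> W"
    using completion_image_window_small by blast
  define \<delta> where "\<delta> = min \<delta>' ((C - \<epsilon>) / 2)"
  have "0 < \<delta>" "\<epsilon> + \<delta> < C" "\<delta> \<le> \<delta>'"
    using \<delta>' \<epsilon> by (auto simp: \<delta>_def min_def field_simps)
  then have \<delta>: "0 < \<delta>" "\<epsilon> + \<delta> < C" "\<phi> ` P \<delta> \<subseteq> W"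
    using \<delta>' window_mono[of \<delta> \<delta>'] by auto
  obtain F where F: "finite F" "F \<subseteq> P (\<epsilon> + \<delta>)" "\<forall>x\<in>P \<epsilon>. \<exists>p\<in>P \<delta>. \<exists>f\<in>F. x = p + f"
    using window_finite_cover[OF \<epsilon>(1) \<delta>(1,2)] by blast
  have "\<exists>f\<in>\<phi> ` F. \<phi> x - f \<in> W" if "x \<in> P \<epsilon>" for x
  proof -
    obtain p f where pf: "p \<in> P \<delta>" "f \<in> F" "x = p + f"
      using F(3) \<open>x \<in> P \<epsilon>\<close> by blast
    have "p \<in> L" "f \<in> L"
      using pf(1,2) F(2) windows_subset[of \<delta>] windows_subset[of "\<epsilon> + \<delta>"] \<delta> \<epsilon> by auto
    then have "\<phi> x = \<phi> p + \<phi> f"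
      using completion_additive pf(3) by blast
    then have "\<phi> x - \<phi> f = \<phi> p"
      by simp
    then show ?thesis
      using pf(1,2) \<delta>(3) by blast
  qed
  then show "\<exists>S. finite S \<and> (\<forall>y\<in>\<phi> ` P \<epsilon>. \<exists>s\<in>S. y - s \<in> W)"
    using F(1) by (intro exI[of _ "\<phi> ` F"]) auto
qed

lemma compact_closure_image_window:
  assumes "complete_group TYPE('h)" "0 < \<epsilon>" "\<epsilon> < C"
  shows "compact (closure (\<phi> ` P \<epsilon>))"
  using assms by (intro compact_if_closed_group_totally_bounded closed_closure
      group_totally_bounded_closure image_window_totally_bounded)

lemma window_nhd_subset_closure_image:
  assumes "open U" "{t \<in> L. \<phi> t \<in> U} \<subseteq> P \<epsilon>"
  shows "U \<subseteq> closure (\<phi> ` P \<epsilon>)"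
proof -
  have "U \<inter> \<phi> ` L \<subseteq> \<phi> ` P \<epsilon>"
    using assms(2) by blast
  then show ?thesis
    using open_Int_closure_subset[OF assms(1), of "\<phi> ` L"] completion_dense closure_mono by blast
qed

lemma locally_compact_completion:
  assumes "complete_group TYPE('h)"
  shows "locally_compact_space (euclidean :: 'h topology)"
proof -
  have \<epsilon>: "0 < C / 2" "C / 2 < C"
    using C_pos by simp_all
  obtain U where U: "open U" "0 \<in> U" "{t \<in> L. \<phi> t \<in> U} \<subseteq> P (C / 2)"
    using completion_window_nhd[OF \<epsilon>] by blast
  show ?thesis
    by (rule locally_compact_space_if_compact_neighbourhood_0[OF U(1,2)
          window_nhd_subset_closure_image[OF U(1,3)] compact_closure_image_window[OF assms \<epsilon>]])
qed

lemma graph_is_lattice: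
  assumes "locally_compact_space (euclidean :: 'g topology)" "complete_group TYPE('h)"
  shows "is_lattice {(t, \<phi> t) | t. t \<in> L}"
proof -
  define \<epsilon> where "\<epsilon> = C / 2"
  have \<epsilon>: "0 < \<epsilon>" "\<epsilon> < C"
    using C_pos by (simp_all add: \<epsilon>_def)
  obtain U where U: "open U" "0 \<in> U" "{t \<in> L. \<phi> t \<in> U} \<subseteq> P \<epsilon>"
    using completion_window_nhd[OF \<epsilon>] by blast
  define E where "E = closure (\<phi> ` P \<epsilon>)"
  have "U \<subseteq> E"
    unfolding E_def using U(1,3) by (rule window_nhd_subset_closure_image)
  have E_covers: "\<exists>s\<in>L. h - \<phi> s \<in> E" for h
  proof -
    obtain s where "s \<in> L" "- \<phi> s + h \<in> U"
      using closure_group_approachable[of h "\<phi> ` L", OF _ U(1,2)] completion_dense by blast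
    then show ?thesis
      using \<open>U \<subseteq> E\<close> by (metis add.commute diff_conv_add_uminus subsetD)
  qed
  have "locally_finite_set {t \<in> L. \<phi> t \<in> U}"
    using window_locally_finite[OF \<epsilon>] U(3) unfolding locally_finite_set_def
    by (meson finite_subset inf_mono order_refl)
  then have "discrete_set {(t, \<phi> t) | t. t \<in> L}"
    by (rule graph_discrete[OF assms(1) subgroup completion_additive U(1,2)])
  moreover have "relatively_dense {(t, \<phi> t) | t. t \<in> L}"
    using windows_subset[OF \<epsilon>] window_relatively_dense[OF \<epsilon>]
      compact_closure_image_window[OF assms(2) \<epsilon>] closure_subset E_covers
    unfolding E_def by (rule graph_relatively_dense[OF subgroup completion_additive])
  ultimately show ?thesis
    using graph_is_subgroup[OF subgroup completion_additive] by (simp add: is_lattice_def)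
qed

end

theorem theorem2p9:
  fixes P :: "real \<Rightarrow> 'g::{topological_ab_group_add, t2_space} set"
    and C :: real
    and L :: "'g set"
    and \<phi> :: "'g \<Rightarrow> 'h::{topological_ab_group_add, t2_space}"
  assumes G_lc: "locally_compact_space (euclidean :: 'g topology)"
    and G_sigma: "sigma_compact_space TYPE('g)"
    and C_pos: "C > 0"
    and L_sub: "is_subgroup L"
    and A1: "\<And>\<epsilon>. 0 < \<epsilon> \<Longrightarrow> \<epsilon> < C \<Longrightarrow> 0 \<in> P \<epsilon> \<and> uminus ` P \<epsilon> = P \<epsilon>"
    and A2: "\<And>\<epsilon>. 0 < \<epsilon> \<Longrightarrow> \<epsilon> < C \<Longrightarrow> locally_finite_set (P \<epsilon>)"
    and A3: "\<And>\<epsilon> \<epsilon>'. 0 < \<epsilon> \<Longrightarrow> 0 < \<epsilon>' \<Longrightarrow> \<epsilon> + \<epsilon>' < C \<Longrightarrow>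
               {x + y | x y. x \<in> P \<epsilon> \<and> y \<in> P \<epsilon>'} \<subseteq> P (\<epsilon> + \<epsilon>')"
    and A4: "\<And>\<epsilon>. 0 < \<epsilon> \<Longrightarrow> \<epsilon> < C \<Longrightarrow> relatively_dense (P \<epsilon>)"
    and A5: "\<And>\<epsilon>. 0 < \<epsilon> \<Longrightarrow> \<epsilon> < C \<Longrightarrow> P \<epsilon> \<subseteq> L"
    and H_complete: "complete_group TYPE('h)"
    and completion: "is_completion_map P C L \<phi>"
  shows "locally_compact_space (euclidean :: 'h topology)
       \<and> is_lattice {(t, \<phi> t) | t. t \<in> L}
       \<and> cut_and_project_scheme {(t, \<phi> t) | t. t \<in> L}
       \<and> fst ` {(t, \<phi> t) | t. t \<in> L} = L
       \<and> (\<forall>t\<in>L. star_map {(t, \<phi> t) | t. t \<in> L} t = \<phi> t)"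
proof -
  interpret window_completion P C L \<phi>
    using A1 A2 A3 A4 C_pos L_sub A5 completion
    by (intro window_completion.intro window_family.intro window_completion_axioms.intro)
  have "is_lattice {(t, \<phi> t) | t. t \<in> L}"
    by (rule graph_is_lattice[OF G_lc H_complete])
  then show ?thesis
    using locally_compact_completion[OF H_complete] completion_dense
    by (simp add: graph_cut_and_project_scheme fst_image_graph star_map_graph)
qed

end
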